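(* Let $\mathfrak{U}$ be a Banach algebra which coincides with the smallest closed subalgebra of $\mathfrak{U}$ containing every closed subalgebra $\mathfrak{V}\subseteq\mathfrak{U}$ for which $\mathfrak{V}^\sharp$ is symmetrically pseudo-amenable. Then for every Banach $\mathfrak{U}$-bimodule $X$, every bounded central derivation $\delta:\mathfrak{U}\to X$ is identically zero.
   Context: $\mathfrak{V}^\sharp=\mathfrak{V}\oplus\mathbb{C}1$ is the unitization of $\mathfrak{V}$ with the $\ell^1$-norm (a unit is adjoined even if $\mathfrak{V}$ is unital). A derivation $\delta:\mathfrak{U}\to X$ is central if $\delta(\mathfrak{U})\subseteq\mathcal{Z}_{\mathfrak{U}}(X)=\{x\in X: ax=xa\ \forall a\in\mathfrak{U}\}$; a derivation is a linear map with $\delta(ab)=\delta(a)b+a\delta(b)$. For a Banach algebra $\mathfrak{A}$, $\mathfrak{A}\widehat{\otimes}\mathfrak{A}$ is the projective tensor product with $a(b\otimes c)=ab\otimes c$, $(b\otimes c)a=b\otimes ca$, $\pi(b\otimes c)=bc$ (extended linearly and continuously); the flip is $(b\otimes c)^\circ=c\otimes b$ and $\mathbf{t}$ is symmetric if $\mathbf{t}^\circ=\mathbf{t}$. A symmetric approximate diagonal is a net $\{\mathbf{t}_\lambda\}$ (not necessarily bounded) of symmetric elements with $a\mathbf{t}_\lambda-\mathbf{t}_\lambda a\to0$ and $\pi(\mathbf{t}_\lambda)a\to a$ for all $a\in\mathfrak{A}$; $\mathfrak{A}$ is symmetrically pseudo-amenable if it has one. *)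

theory Defs
  imports "HOL-Analysis.Analysis"
begin

class cplx_vector = real_vector +
  fixes scaleC :: "complex \<Rightarrow> 'a \<Rightarrow> 'a"
  assumes scaleC_add_right: "scaleC c (x + y) = scaleC c x + scaleC c y"
    and scaleC_add_left: "scaleC (c + d) x = scaleC c x + scaleC d x"
    and scaleC_scaleC: "scaleC c (scaleC d x) = scaleC (c * d) x"
    and scaleC_one: "scaleC 1 x = x"
    and scaleR_scaleC: "scaleR r x = scaleC (complex_of_real r) x"

class cplx_normed_vector = cplx_vector + real_normed_vector +
  assumes norm_scaleC: "norm (scaleC c x) = cmod c * norm x"

class cplx_normed_algebra = cplx_normed_vector + real_normed_algebra +
  assumes scaleC_left_mult: "scaleC c x * y = scaleC c (x * y)"
    and scaleC_right_mult: "x * scaleC c y = scaleC c (x * y)"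

definition cplx_subalgebra :: "'a::cplx_normed_algebra set \<Rightarrow> bool" where
  "cplx_subalgebra V \<longleftrightarrow> 0 \<in> V \<and> (\<forall>x\<in>V. \<forall>y\<in>V. x + y \<in> V \<and> x * y \<in> V)
     \<and> (\<forall>c. \<forall>x\<in>V. scaleC c x \<in> V)"

definition closed_subalgebra :: "'a::cplx_normed_algebra set \<Rightarrow> bool" where
  "closed_subalgebra V \<longleftrightarrow> cplx_subalgebra V \<and> closed V"

section \<open>The unitization V# = V (+) C1 with the l1-norm, as pairs (v, lambda)\<close>

definition uset :: "'a set \<Rightarrow> ('a \<times> complex) set" where
  "uset V = V \<times> UNIV"

definition unorm :: "'a::cplx_normed_algebra \<times> complex \<Rightarrow> real" where
  "unorm x = norm (fst x) + cmod (snd x)"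

definition umult :: "'a::cplx_normed_algebra \<times> complex \<Rightarrow> 'a \<times> complex \<Rightarrow> 'a \<times> complex" where
  "umult x y = (fst x * fst y + scaleC (snd y) (fst x) + scaleC (snd x) (fst y), snd x * snd y)"

definition uscale :: "complex \<Rightarrow> 'a::cplx_normed_algebra \<times> complex \<Rightarrow> 'a \<times> complex" where
  "uscale c x = (scaleC c (fst x), c * snd x)"

text \<open>Bounded complex-bilinear forms on V# x V# of norm at most 1 (the unit ball of the
  dual of the projective tensor product).\<close>
definition bilin1 :: "'a::cplx_normed_algebra set \<Rightarrow> ('a \<times> complex \<Rightarrow> 'a \<times> complex \<Rightarrow> complex) \<Rightarrow> bool" where
  "bilin1 V phi \<longleftrightarrow>
     (\<forall>x\<in>uset V. \<forall>y\<in>uset V. \<forall>z\<in>uset V.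
        phi (x + y) z = phi x z + phi y z \<and> phi z (x + y) = phi z x + phi z y)
   \<and> (\<forall>c. \<forall>x\<in>uset V. \<forall>y\<in>uset V.
        phi (uscale c x) y = c * phi x y \<and> phi x (uscale c y) = c * phi x y)
   \<and> (\<forall>x\<in>uset V. \<forall>y\<in>uset V. cmod (phi x y) \<le> unorm x * unorm y)"

text \<open>Every element of the completed projective tensor product is of the form
  sum_n b_n (x) c_n with sum_n |b_n| |c_n| < infinity; such a sequence is a representation.\<close>
definition tensor_rep :: "'a::cplx_normed_algebra set \<Rightarrow> (nat \<Rightarrow> ('a \<times> complex) \<times> ('a \<times> complex)) \<Rightarrow> bool" where
  "tensor_rep V r \<longleftrightarrow> (\<forall>n. fst (r n) \<in> uset V \<and> snd (r n) \<in> uset V)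
     \<and> summable (\<lambda>n. unorm (fst (r n)) * unorm (snd (r n)))"

definition tev :: "('a \<times> complex \<Rightarrow> 'a \<times> complex \<Rightarrow> complex) \<Rightarrow> (nat \<Rightarrow> ('a \<times> complex) \<times> ('a \<times> complex)) \<Rightarrow> complex" where
  "tev phi r = (\<Sum>n. phi (fst (r n)) (snd (r n)))"

text \<open>The projective norm of a tensor, given through its pairing with bilinear forms
  (Hahn-Banach: the norm equals the sup over the dual unit ball).\<close>
definition pnorm :: "'a::cplx_normed_algebra set \<Rightarrow> (('a \<times> complex \<Rightarrow> 'a \<times> complex \<Rightarrow> complex) \<Rightarrow> complex) \<Rightarrow> real" where
  "pnorm V L = Sup {cmod (L phi) | phi. bilin1 V phi}"

text \<open>a t - t a, as a functional on bilinear forms.\<close>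
definition tcomm :: "'a::cplx_normed_algebra \<times> complex \<Rightarrow> (nat \<Rightarrow> ('a \<times> complex) \<times> ('a \<times> complex))
     \<Rightarrow> ('a \<times> complex \<Rightarrow> 'a \<times> complex \<Rightarrow> complex) \<Rightarrow> complex" where
  "tcomm a r phi = tev phi (\<lambda>n. (umult a (fst (r n)), snd (r n)))
                  - tev phi (\<lambda>n. (fst (r n), umult (snd (r n)) a))"

definition tflip :: "(nat \<Rightarrow> ('a \<times> complex) \<times> ('a \<times> complex)) \<Rightarrow> nat \<Rightarrow> ('a \<times> complex) \<times> ('a \<times> complex)" where
  "tflip r = (\<lambda>n. (snd (r n), fst (r n)))"

definition tsymmetric :: "'a::cplx_normed_algebra set \<Rightarrow> (nat \<Rightarrow> ('a \<times> complex) \<times> ('a \<times> complex)) \<Rightarrow> bool" where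
  "tsymmetric V r \<longleftrightarrow> (\<forall>phi. bilin1 V phi \<longrightarrow> tev phi (tflip r) = tev phi r)"

definition tpi :: "(nat \<Rightarrow> ('a::cplx_normed_algebra \<times> complex) \<times> ('a \<times> complex)) \<Rightarrow> 'a \<times> complex" where
  "tpi r = (\<Sum>n. umult (fst (r n)) (snd (r n)))"

text \<open>V# is symmetrically pseudo-amenable: there is a net (here: a proper filter on
  representations of tensors) of symmetric elements forming an approximate diagonal.\<close>
definition unitization_sym_pseudo_amenable :: "'a::{cplx_normed_algebra,banach} set \<Rightarrow> bool" where
  "unitization_sym_pseudo_amenable V \<longleftrightarrow>
    (\<exists>F :: (nat \<Rightarrow> ('a \<times> complex) \<times> ('a \<times> complex)) filter.
        F \<noteq> bot
      \<and> (\<forall>\<^sub>F r in F. tensor_rep V r \<and> tsymmetric V r)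
      \<and> (\<forall>a\<in>uset V. ((\<lambda>r. pnorm V (tcomm a r)) \<longlongrightarrow> 0) F)
      \<and> (\<forall>a\<in>uset V. ((\<lambda>r. unorm (umult (tpi r) a - a)) \<longlongrightarrow> 0) F))"

definition banach_bimodule ::
  "('a::{cplx_normed_algebra,banach} \<Rightarrow> 'x::{cplx_normed_vector,banach} \<Rightarrow> 'x) \<Rightarrow> ('x \<Rightarrow> 'a \<Rightarrow> 'x) \<Rightarrow> bool" where
  "banach_bimodule lm rm \<longleftrightarrow>
     (\<forall>a b x. lm (a + b) x = lm a x + lm b x \<and> rm x (a + b) = rm x a + rm x b)
   \<and> (\<forall>a x y. lm a (x + y) = lm a x + lm a y \<and> rm (x + y) a = rm x a + rm y a)
   \<and> (\<forall>c a x. lm (scaleC c a) x = scaleC c (lm a x) \<and> lm a (scaleC c x) = scaleC c (lm a x)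
            \<and> rm x (scaleC c a) = scaleC c (rm x a) \<and> rm (scaleC c x) a = scaleC c (rm x a))
   \<and> (\<forall>a b x. lm (a * b) x = lm a (lm b x) \<and> rm x (a * b) = rm (rm x a) b
            \<and> rm (lm a x) b = lm a (rm x b))
   \<and> (\<exists>K. \<forall>a x. norm (lm a x) \<le> K * norm a * norm x \<and> norm (rm x a) \<le> K * norm a * norm x)"

definition bounded_derivation ::
  "('a::{cplx_normed_algebra,banach} \<Rightarrow> 'x::{cplx_normed_vector,banach} \<Rightarrow> 'x) \<Rightarrow> ('x \<Rightarrow> 'a \<Rightarrow> 'x)
     \<Rightarrow> ('a \<Rightarrow> 'x) \<Rightarrow> bool" where
  "bounded_derivation lm rm d \<longleftrightarrow>
     (\<forall>a b. d (a + b) = d a + d b) \<and> (\<forall>c a. d (scaleC c a) = scaleC c (d a))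
   \<and> (\<exists>K. \<forall>a. norm (d a) \<le> K * norm a)
   \<and> (\<forall>a b. d (a * b) = rm (d a) b + lm a (d b))"

definition central_map ::
  "('a \<Rightarrow> 'x \<Rightarrow> 'x) \<Rightarrow> ('x \<Rightarrow> 'a \<Rightarrow> 'x) \<Rightarrow> ('a \<Rightarrow> 'x) \<Rightarrow> bool" where
  "central_map lm rm d \<longleftrightarrow> (\<forall>a b. lm a (d b) = rm (d b) a)"

end

theory Submission
  imports Defs
begin

text \<open>The kernel of d is a closed subalgebra, so it suffices that d vanishes on every closed
  subalgebra V for which V# is symmetrically pseudo-amenable. Fix a \<in> V and a bounded functional f
  on X, and pair a symmetric approximate diagonal t = \<Sum> b_n \<otimes> c_n of V# with the bilinear form
  \<phi>(p, q) = f(d(q)\<cdot>p). Since d is a central derivation, \<phi>(a p, q) - \<phi>(p, q a) = -f(d(a)\<cdot>q p),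
  so by symmetry of t the pairing of a t - t a with \<phi> equals -f(d(a)\<cdot>\<pi>(t)). The left side tends to
  0 and the right side to -f(d(a)); by Hahn-Banach, d(a) = 0.\<close>

section \<open>Hahn-Banach\<close>

text \<open>Partial functionals are handled through their graphs, so that Zorn's lemma applies
  to set inclusion.\<close>
definition norm_dominated_linear_graph :: "('x::real_normed_vector \<times> real) set \<Rightarrow> bool" where
  "norm_dominated_linear_graph G \<longleftrightarrow>
     (\<forall>x a y b. (x, a) \<in> G \<longrightarrow> (y, b) \<in> G \<longrightarrow> (x + y, a + b) \<in> G)
   \<and> (\<forall>x a c. (x, a) \<in> G \<longrightarrow> (c *\<^sub>R x, c * a) \<in> G)
   \<and> (\<forall>x a. (x, a) \<in> G \<longrightarrow> a \<le> norm x)"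

lemma norm_dominated_linear_graph_unique:
  assumes G: "norm_dominated_linear_graph G" and "(x, a) \<in> G" "(x, b) \<in> G"
  shows "a = b"
proof -
  have "(x + (-1) *\<^sub>R x, a + (-1) * b) \<in> G" "(x + (-1) *\<^sub>R x, b + (-1) * a) \<in> G"
    using G assms(2,3) unfolding norm_dominated_linear_graph_def by blast+
  then have "a - b \<le> 0" "b - a \<le> 0"
    using G unfolding norm_dominated_linear_graph_def by fastforce+
  then show ?thesis by simp
qed

lemma norm_dominated_linear_graph_extension_constant:
  assumes G: "norm_dominated_linear_graph G" and "(0, 0) \<in> G"
  obtains c where "\<And>x a. (x, a) \<in> G \<Longrightarrow> a - norm (x - y) \<le> c"
    and "\<And>x a. (x, a) \<in> G \<Longrightarrow> c \<le> norm (x + y) - a"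
proof -
  define S where "S = {a - norm (x - y) | x a. (x, a) \<in> G}"
  have below: "s \<le> norm (z + y) - b" if "s \<in> S" "(z, b) \<in> G" for s z b
  proof -
    obtain x a where s: "s = a - norm (x - y)" and xa: "(x, a) \<in> G"
      using \<open>s \<in> S\<close> S_def by auto
    have "a + b \<le> norm (x + z)"
      using G xa that(2) unfolding norm_dominated_linear_graph_def by blast
    also have "\<dots> \<le> norm (x - y) + norm (z + y)"
      using norm_triangle_ineq[of "x - y" "z + y"] by simp
    finally show ?thesis using s by simp
  qed
  have "S \<noteq> {}" using assms(2) S_def by auto
  have "bdd_above S" using below assms(2) by (meson bdd_above.I)
  show ?thesis
  proof (rule that)
    show "a - norm (x - y) \<le> Sup S" if "(x, a) \<in> G" for x a
      using cSup_upper[OF _ \<open>bdd_above S\<close>] that unfolding S_def by blast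
    show "Sup S \<le> norm (x + y) - a" if "(x, a) \<in> G" for x a
      using cSup_least[OF \<open>S \<noteq> {}\<close>] below that by blast
  qed
qed

lemma norm_dominated_adjoin_le:
  assumes G: "norm_dominated_linear_graph G"
    and lower: "\<And>x a. (x, a) \<in> G \<Longrightarrow> a - norm (x - y) \<le> c"
    and upper: "\<And>x a. (x, a) \<in> G \<Longrightarrow> c \<le> norm (x + y) - a"
    and xa: "(x, a) \<in> G"
  shows "a + t * c \<le> norm (x + t *\<^sub>R y)"
proof -
  have scaled: "((1 / s) *\<^sub>R x, (1 / s) * a) \<in> G" for s
    using G xa unfolding norm_dominated_linear_graph_def by blast
  consider "t = 0" | "t > 0" | "t < 0" by linarith
  then show ?thesis
  proof cases
    case 1
    then show ?thesis using G xa unfolding norm_dominated_linear_graph_def by auto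
  next
    case 2
    have "t * c \<le> t * (norm ((1 / t) *\<^sub>R x + y) - (1 / t) * a)"
      using upper[OF scaled[of t]] 2 by (intro mult_left_mono) auto
    also have "\<dots> = norm (t *\<^sub>R ((1 / t) *\<^sub>R x + y)) - a"
      using 2 by (simp add: right_diff_distrib)
    also have "t *\<^sub>R ((1 / t) *\<^sub>R x + y) = x + t *\<^sub>R y"
      using 2 by (simp add: algebra_simps)
    finally show ?thesis by simp
  next
    case 3
    have "x + t *\<^sub>R y = (- t) *\<^sub>R ((1 / - t) *\<^sub>R x - y)"
      using 3 by (simp add: algebra_simps)
    then have "norm (x + t *\<^sub>R y) = (- t) * norm ((1 / - t) *\<^sub>R x - y)"
      using 3 by simp
    then have "a - norm (x + t *\<^sub>R y) = (- t) * ((1 / - t) * a - norm ((1 / - t) *\<^sub>R x - y))"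
      using 3 by (simp add: right_diff_distrib)
    also have "\<dots> \<le> (- t) * c"
      using lower[OF scaled[of "- t"]] 3 by (intro mult_left_mono) auto
    finally show ?thesis by simp
  qed
qed

lemma norm_dominated_linear_graph_adjoin:
  assumes G: "norm_dominated_linear_graph G"
    and lower: "\<And>x a. (x, a) \<in> G \<Longrightarrow> a - norm (x - y) \<le> c"
    and upper: "\<And>x a. (x, a) \<in> G \<Longrightarrow> c \<le> norm (x + y) - a"
  shows "norm_dominated_linear_graph {(x + t *\<^sub>R y, a + t * c) | x a t. (x, a) \<in> G}"
  unfolding norm_dominated_linear_graph_def
proof (intro conjI allI impI)
  fix x a z b
  assume "(x, a) \<in> {(x + t *\<^sub>R y, a + t * c) | x a t. (x, a) \<in> G}"
    "(z, b) \<in> {(x + t *\<^sub>R y, a + t * c) | x a t. (x, a) \<in> G}"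
  then obtain x1 a1 t1 x2 a2 t2 where "(x1, a1) \<in> G" "(x2, a2) \<in> G"
    "x = x1 + t1 *\<^sub>R y" "a = a1 + t1 * c" "z = x2 + t2 *\<^sub>R y" "b = a2 + t2 * c"
    by blast
  moreover from calculation have "(x1 + x2, a1 + a2) \<in> G"
    using G unfolding norm_dominated_linear_graph_def by blast
  moreover from calculation
  have "(x + z, a + b) = ((x1 + x2) + (t1 + t2) *\<^sub>R y, (a1 + a2) + (t1 + t2) * c)"
    by (simp add: algebra_simps)
  ultimately show "(x + z, a + b) \<in> {(x + t *\<^sub>R y, a + t * c) | x a t. (x, a) \<in> G}"
    by blast
next
  fix x a r
  assume "(x, a) \<in> {(x + t *\<^sub>R y, a + t * c) | x a t. (x, a) \<in> G}"
  then obtain x1 a1 t where "(x1, a1) \<in> G" "x = x1 + t *\<^sub>R y" "a = a1 + t * c"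
    by blast
  moreover from calculation have "(r *\<^sub>R x1, r * a1) \<in> G"
    using G unfolding norm_dominated_linear_graph_def by blast
  moreover from calculation
  have "(r *\<^sub>R x, r * a) = (r *\<^sub>R x1 + (r * t) *\<^sub>R y, r * a1 + (r * t) * c)"
    by (simp add: algebra_simps)
  ultimately show "(r *\<^sub>R x, r * a) \<in> {(x + t *\<^sub>R y, a + t * c) | x a t. (x, a) \<in> G}"
    by blast
next
  fix x a
  assume "(x, a) \<in> {(x + t *\<^sub>R y, a + t * c) | x a t. (x, a) \<in> G}"
  then show "a \<le> norm x"
    using norm_dominated_adjoin_le[OF G lower upper] by blast
qed

lemma norm_dominated_linear_graph_extend:
  assumes G: "norm_dominated_linear_graph G" and "(0, 0) \<in> G" and y: "y \<notin> fst ` G"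
  shows "\<exists>G'. norm_dominated_linear_graph G' \<and> G \<subset> G'"
proof -
  obtain c where lower: "\<And>x a. (x, a) \<in> G \<Longrightarrow> a - norm (x - y) \<le> c"
    and upper: "\<And>x a. (x, a) \<in> G \<Longrightarrow> c \<le> norm (x + y) - a"
    using norm_dominated_linear_graph_extension_constant[OF assms(1,2)] by blast
  let ?G' = "{(x + t *\<^sub>R y, a + t * c) | x a t. (x, a) \<in> G}"
  have "G \<subseteq> ?G'" by force
  moreover have "(y, c) \<in> ?G'" using assms(2) by force
  ultimately show ?thesis
    using norm_dominated_linear_graph_adjoin[OF G lower upper] y by force
qed

lemma norm_dominated_linear_graph_Union_chain:
  assumes "subset.chain {G. norm_dominated_linear_graph G} C"
  shows "norm_dominated_linear_graph (\<Union>C)"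
proof -
  have good: "norm_dominated_linear_graph G" if "G \<in> C" for G
    using assms that unfolding subset.chain_def by blast
  have common: "\<exists>G\<in>C. (x, a) \<in> G \<and> (y, b) \<in> G"
    if "(x, a) \<in> \<Union>C" "(y, b) \<in> \<Union>C" for x a y b
    using assms that unfolding subset.chain_def by blast
  show ?thesis
    unfolding norm_dominated_linear_graph_def
  proof (intro conjI allI impI)
    show "(x + y, a + b) \<in> \<Union>C" if "(x, a) \<in> \<Union>C" "(y, b) \<in> \<Union>C" for x a y b
      using common[OF that] good unfolding norm_dominated_linear_graph_def by blast
    show "(c *\<^sub>R x, c * a) \<in> \<Union>C" if "(x, a) \<in> \<Union>C" for x a c
      using that good unfolding norm_dominated_linear_graph_def by blast
    show "a \<le> norm x" if "(x, a) \<in> \<Union>C" for x a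
      using that good unfolding norm_dominated_linear_graph_def by blast
  qed
qed

lemma norm_dominated_linear_graph_line:
  fixes x0 :: "'x::real_normed_vector"
  defines "G0 \<equiv> {(t *\<^sub>R x0, t * norm x0) | t. True}"
  shows "norm_dominated_linear_graph G0"
  unfolding norm_dominated_linear_graph_def
proof (intro conjI allI impI)
  show "(x + y, a + b) \<in> G0" if "(x, a) \<in> G0" "(y, b) \<in> G0" for x a y b
  proof -
    from that obtain s t where "x = s *\<^sub>R x0" "a = s * norm x0" "y = t *\<^sub>R x0" "b = t * norm x0"
      unfolding G0_def by blast
    then show ?thesis unfolding G0_def by (auto intro!: exI[of _ "s + t"] simp: algebra_simps)
  qed
  show "(c *\<^sub>R x, c * a) \<in> G0" if "(x, a) \<in> G0" for x a c
  proof -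
    from that obtain t where "x = t *\<^sub>R x0" "a = t * norm x0" unfolding G0_def by blast
    then show ?thesis unfolding G0_def by (auto intro!: exI[of _ "c * t"])
  qed
  show "a \<le> norm x" if "(x, a) \<in> G0" for x a
    using that unfolding G0_def by (auto intro!: mult_right_mono)
qed

lemma norming_functional_exists:
  fixes x0 :: "'x::real_normed_vector"
  obtains g :: "'x \<Rightarrow> real" where "linear g" "\<And>x. g x \<le> norm x" "g x0 = norm x0"
proof -
  define G0 where "G0 = {(t *\<^sub>R x0, t * norm x0) | t. True}"
  define A where "A = {G. norm_dominated_linear_graph G \<and> G0 \<subseteq> G}"
  have "norm_dominated_linear_graph G0"
    unfolding G0_def by (rule norm_dominated_linear_graph_line)
  then have "A \<noteq> {}" unfolding A_def by auto
  have "\<exists>M\<in>A. \<forall>G\<in>A. M \<subseteq> G \<longrightarrow> G = M"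
  proof (rule subset_Zorn_nonempty[OF \<open>A \<noteq> {}\<close>])
    fix C assume "C \<noteq> {}" "subset.chain A C"
    then have "subset.chain {G. norm_dominated_linear_graph G} C" "G0 \<subseteq> \<Union>C"
      unfolding A_def subset.chain_def by blast+
    then show "\<Union>C \<in> A" unfolding A_def using norm_dominated_linear_graph_Union_chain by blast
  qed
  then obtain M where "M \<in> A" and max: "\<And>G. G \<in> A \<Longrightarrow> M \<subseteq> G \<Longrightarrow> G = M"
    by blast
  then have M: "norm_dominated_linear_graph M" and "G0 \<subseteq> M" unfolding A_def by auto
  have "(0, 0) \<in> M" using \<open>G0 \<subseteq> M\<close> unfolding G0_def by force
  have total: "x \<in> fst ` M" for x
  proof (rule ccontr)
    assume "x \<notin> fst ` M"
    then obtain G where "norm_dominated_linear_graph G" "M \<subset> G"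
      using norm_dominated_linear_graph_extend[OF M \<open>(0, 0) \<in> M\<close>] by blast
    then show False using max[of G] \<open>G0 \<subseteq> M\<close> unfolding A_def by auto
  qed
  define g where "g x = (THE a. (x, a) \<in> M)" for x
  have graph: "(x, g x) \<in> M" for x
    using total[of x] norm_dominated_linear_graph_unique[OF M]
    unfolding g_def by (metis (no_types, lifting) image_iff prod.collapse theI)
  have g_eq: "g x = a" if "(x, a) \<in> M" for x a
    using norm_dominated_linear_graph_unique[OF M graph that] .
  show ?thesis
  proof (rule that)
    show "linear g"
      by (rule linearI) (use M graph g_eq in \<open>auto simp: norm_dominated_linear_graph_def\<close>)
    show "g x \<le> norm x" for x using M graph unfolding norm_dominated_linear_graph_def by blast
    have "(x0, norm x0) \<in> G0" unfolding G0_def by (auto intro!: exI[of _ 1])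
    then show "g x0 = norm x0" using g_eq \<open>G0 \<subseteq> M\<close> by blast
  qed
qed

lemma scaleC_eq_scaleR_Re_Im:
  fixes x :: "'x::cplx_vector"
  shows "scaleC c x = Re c *\<^sub>R x + Im c *\<^sub>R scaleC \<i> x"
proof -
  have "Re c *\<^sub>R x + Im c *\<^sub>R scaleC \<i> x = scaleC (of_real (Re c) + of_real (Im c) * \<i>) x"
    by (simp add: scaleR_scaleC scaleC_scaleC scaleC_add_left)
  also have "of_real (Re c) + of_real (Im c) * \<i> = c"
    by (simp add: complex_eq_iff)
  finally show ?thesis by simp
qed

definition bounded_cfunctional :: "('x::cplx_normed_vector \<Rightarrow> complex) \<Rightarrow> bool" where
  "bounded_cfunctional f \<longleftrightarrow> (\<forall>x y. f (x + y) = f x + f y) \<and> (\<forall>c x. f (scaleC c x) = c * f x)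
     \<and> (\<exists>K. \<forall>x. cmod (f x) \<le> K * norm x)"

lemma bounded_cfunctionalD:
  assumes "bounded_cfunctional f"
  shows "f (x + y) = f x + f y" "f (scaleC c x) = c * f x"
  using assms unfolding bounded_cfunctional_def by blast+

lemma bounded_cfunctional_bound:
  assumes "bounded_cfunctional f"
  obtains C where "C \<ge> 0" "\<And>x. cmod (f x) \<le> C * norm x"
proof -
  obtain C where C: "\<And>x. cmod (f x) \<le> C * norm x"
    using assms unfolding bounded_cfunctional_def by blast
  have "cmod (f x) \<le> \<bar>C\<bar> * norm x" for x
  proof -
    have "C * norm x \<le> \<bar>C\<bar> * norm x" by (intro mult_right_mono) auto
    then show ?thesis using C[of x] by linarith
  qed
  then show ?thesis by (intro that[of "\<bar>C\<bar>"]) auto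
qed

lemma bounded_cfunctional_nonzero:
  fixes x0 :: "'x::cplx_normed_vector"
  assumes "x0 \<noteq> 0"
  obtains f where "bounded_cfunctional f" "f x0 \<noteq> 0"
proof -
  obtain g :: "'x \<Rightarrow> real" where g: "linear g" and le: "\<And>x. g x \<le> norm x"
    and g0: "g x0 = norm x0"
    using norming_functional_exists[of x0] by blast
  have abs_le: "\<bar>g x\<bar> \<le> norm x" for x
    using le[of x] le[of "- x"] linear_neg[OF g, of x] by simp
  have g_scaleC: "g (scaleC c x) = Re c * g x + Im c * g (scaleC \<i> x)" for c x
    by (simp add: scaleC_eq_scaleR_Re_Im[of c x] linear_add[OF g] linear_scale[OF g])
  define f where "f x = complex_of_real (g x) - \<i> * complex_of_real (g (scaleC \<i> x))" for x
  have "bounded_cfunctional f"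
    unfolding bounded_cfunctional_def
  proof (intro conjI allI exI)
    show "f (x + y) = f x + f y" for x y
      unfolding f_def by (simp add: linear_add[OF g] scaleC_add_right algebra_simps)
    show "f (scaleC c x) = c * f x" for c x
    proof -
      have "g (scaleC \<i> (scaleC c x)) = - Im c * g x + Re c * g (scaleC \<i> x)"
        by (simp only: scaleC_scaleC g_scaleC[of "\<i> * c" x]) simp
      then show ?thesis
        unfolding f_def g_scaleC[of c x] by (simp add: complex_eq_iff algebra_simps)
    qed
    show "cmod (f x) \<le> 2 * norm x" for x
    proof -
      have "cmod (f x) \<le> \<bar>g x\<bar> + \<bar>g (scaleC \<i> x)\<bar>"
        unfolding f_def
        using norm_triangle_ineq4[of "of_real (g x)" "\<i> * of_real (g (scaleC \<i> x))"]
        by (simp add: norm_mult)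
      also have "\<dots> \<le> 2 * norm x"
        using abs_le[of x] abs_le[of "scaleC \<i> x"] by (simp add: norm_scaleC)
      finally show ?thesis .
    qed
  qed
  moreover have "f x0 \<noteq> 0"
    using assms unfolding f_def by (simp add: g0 complex_eq_iff)
  ultimately show ?thesis by (rule that)
qed

section \<open>The unitization and its bounded forms\<close>

lemma scaleC_zero_left [simp]: "scaleC 0 x = (0::'x::cplx_vector)"
  using scaleR_scaleC[of 0 x] by simp

lemma scaleC_zero_right [simp]: "scaleC c (0::'x::cplx_vector) = 0"
  using scaleC_add_right[of c 0 0] by simp

lemma mem_uset_iff: "p \<in> uset V \<longleftrightarrow> fst p \<in> V"
  unfolding uset_def by (cases p) auto

lemma umult_mem_uset:
  assumes "cplx_subalgebra V" "p \<in> uset V" "q \<in> uset V"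
  shows "umult p q \<in> uset V"
  using assms unfolding mem_uset_iff umult_def cplx_subalgebra_def by simp

lemma unit_mem_uset: "cplx_subalgebra V \<Longrightarrow> (0, 1) \<in> uset V"
  unfolding mem_uset_iff cplx_subalgebra_def by simp

lemma unorm_nonneg: "unorm p \<ge> 0"
  unfolding unorm_def by simp

lemma norm_le_unorm: "norm p \<le> unorm p"
  unfolding unorm_def by (cases p) (simp add: norm_Pair_le)

lemma unorm_le_norm: "unorm p \<le> 2 * norm p"
  unfolding unorm_def using norm_fst_le[of "fst p" "snd p"] norm_snd_le[of "snd p" "fst p"] by simp

lemma unorm_umult_le: "unorm (umult p q) \<le> unorm p * unorm q"
proof -
  obtain v l w m where p: "p = (v, l)" and q: "q = (w, m)" by fastforce
  have "norm (v * w + scaleC m v + scaleC l w) \<le> norm (v * w) + norm (scaleC m v) + norm (scaleC l w)"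
    by (meson add_mono norm_triangle_ineq order_trans order_refl)
  also have "\<dots> \<le> norm v * norm w + cmod m * norm v + cmod l * norm w"
    by (simp add: norm_scaleC norm_mult_ineq)
  finally show ?thesis
    unfolding unorm_def umult_def p q by (simp add: norm_mult algebra_simps)
qed

lemma umult_unit_right [simp]: "umult p (0, 1) = p"
  unfolding umult_def by (simp add: scaleC_one)

lemma umult_add_left: "umult (p + p') q = umult p q + umult p' q"
  unfolding umult_def by (simp add: scaleC_add_right scaleC_add_left algebra_simps)

lemma umult_add_right: "umult q (p + p') = umult q p + umult q p'"
  unfolding umult_def by (simp add: scaleC_add_right scaleC_add_left algebra_simps)

lemma umult_uscale_left: "umult (uscale c p) q = uscale c (umult p q)"
  unfolding umult_def uscale_def
  by (simp add: scaleC_left_mult scaleC_add_right scaleC_scaleC algebra_simps)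

lemma umult_uscale_right: "umult p (uscale c q) = uscale c (umult p q)"
  unfolding umult_def uscale_def
  by (simp add: scaleC_right_mult scaleC_add_right scaleC_scaleC algebra_simps)

lemma scaleR_eq_uscale: "r *\<^sub>R p = uscale (of_real r) p"
  unfolding uscale_def by (cases p) (simp add: scaleR_scaleC scaleR_conv_of_real)

definition bounded_ubilinear :: "('a::cplx_normed_algebra \<times> complex \<Rightarrow> 'a \<times> complex \<Rightarrow> complex) \<Rightarrow> bool"
  where
  "bounded_ubilinear phi \<longleftrightarrow>
     (\<forall>p p' q. phi (p + p') q = phi p q + phi p' q \<and> phi q (p + p') = phi q p + phi q p')
   \<and> (\<forall>c p q. phi (uscale c p) q = c * phi p q \<and> phi p (uscale c q) = c * phi p q)
   \<and> (\<exists>C. \<forall>p q. cmod (phi p q) \<le> C * (unorm p * unorm q))"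

definition bounded_ulinear :: "('a::cplx_normed_algebra \<times> complex \<Rightarrow> complex) \<Rightarrow> bool" where
  "bounded_ulinear psi \<longleftrightarrow>
     (\<forall>p q. psi (p + q) = psi p + psi q) \<and> (\<forall>c p. psi (uscale c p) = c * psi p)
   \<and> (\<exists>C. \<forall>p. cmod (psi p) \<le> C * unorm p)"

lemma bounded_ubilinearI:
  assumes "\<And>p p' q. phi (p + p') q = phi p q + phi p' q"
    and "\<And>p p' q. phi q (p + p') = phi q p + phi q p'"
    and "\<And>c p q. phi (uscale c p) q = c * phi p q"
    and "\<And>c p q. phi p (uscale c q) = c * phi p q"
    and "\<And>p q. cmod (phi p q) \<le> C * (unorm p * unorm q)"
  shows "bounded_ubilinear phi"
  unfolding bounded_ubilinear_def using assms by blast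

lemma bounded_ubilinearD:
  assumes "bounded_ubilinear phi"
  shows "phi (p + p') q = phi p q + phi p' q" "phi q (p + p') = phi q p + phi q p'"
    "phi (uscale c p) q = c * phi p q" "phi p (uscale c q) = c * phi p q"
  using assms unfolding bounded_ubilinear_def by blast+

lemma bounded_ulinearD:
  assumes "bounded_ulinear psi"
  shows "psi (p + q) = psi p + psi q" "psi (uscale c p) = c * psi p"
  using assms unfolding bounded_ulinear_def by blast+

lemma bounded_ubilinear_bound:
  assumes "bounded_ubilinear phi"
  obtains C where "C > 0" "\<And>p q. cmod (phi p q) \<le> C * (unorm p * unorm q)"
proof -
  obtain C where C: "\<And>p q. cmod (phi p q) \<le> C * (unorm p * unorm q)"
    using assms unfolding bounded_ubilinear_def by blast
  show ?thesis
  proof (rule that)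
    show "(0::real) < \<bar>C\<bar> + 1" by simp
    show "cmod (phi p q) \<le> (\<bar>C\<bar> + 1) * (unorm p * unorm q)" for p q
    proof -
      have "C * (unorm p * unorm q) \<le> (\<bar>C\<bar> + 1) * (unorm p * unorm q)"
        by (rule mult_right_mono) (auto simp: unorm_nonneg)
      then show ?thesis using C[of p q] by linarith
    qed
  qed
qed

lemma bounded_ulinear_bound:
  assumes "bounded_ulinear psi"
  obtains C where "C > 0" "\<And>p. cmod (psi p) \<le> C * unorm p"
proof -
  obtain C where C: "\<And>p. cmod (psi p) \<le> C * unorm p"
    using assms unfolding bounded_ulinear_def by blast
  show ?thesis
  proof (rule that)
    show "(0::real) < \<bar>C\<bar> + 1" by simp
    show "cmod (psi p) \<le> (\<bar>C\<bar> + 1) * unorm p" for p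
    proof -
      have "C * unorm p \<le> (\<bar>C\<bar> + 1) * unorm p"
        by (rule mult_right_mono) (auto simp: unorm_nonneg)
      then show ?thesis using C[of p] by linarith
    qed
  qed
qed

lemma bounded_ubilinear_scaled_bilin1:
  assumes "bounded_ubilinear phi"
  obtains C where "C > 0" "bilin1 V (\<lambda>p q. phi p q / of_real C)"
proof -
  obtain C where "C > 0" and C: "\<And>p q. cmod (phi p q) \<le> C * (unorm p * unorm q)"
    using bounded_ubilinear_bound[OF assms] by blast
  have "bilin1 V (\<lambda>p q. phi p q / of_real C)"
    unfolding bilin1_def
  proof (intro conjI ballI allI)
    show "cmod (phi p q / of_real C) \<le> unorm p * unorm q" for p q
      using C[of p q] \<open>C > 0\<close> by (simp add: norm_divide divide_le_eq mult.commute)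
  qed (simp_all add: bounded_ubilinearD[OF assms] add_divide_distrib)
  with \<open>C > 0\<close> show ?thesis by (rule that)
qed

lemma bounded_ubilinear_swap:
  assumes "bounded_ubilinear phi"
  shows "bounded_ubilinear (\<lambda>p q. phi q p)"
proof -
  obtain C where C: "\<And>p q. cmod (phi p q) \<le> C * (unorm p * unorm q)"
    using bounded_ubilinear_bound[OF assms] by blast
  show ?thesis
  proof (rule bounded_ubilinearI[where C = C])
    show "cmod (phi q p) \<le> C * (unorm p * unorm q)" for p q
      using C[of q p] by (simp add: mult.commute)
  qed (simp_all add: bounded_ubilinearD[OF assms])
qed

lemma bounded_ubilinear_umult_left:
  assumes "bounded_ubilinear phi"
  shows "bounded_ubilinear (\<lambda>p q. phi (umult a p) q)"
proof -
  obtain C where "C > 0" and C: "\<And>p q. cmod (phi p q) \<le> C * (unorm p * unorm q)"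
    using bounded_ubilinear_bound[OF assms] by blast
  have "cmod (phi (umult a p) q) \<le> (C * unorm a) * (unorm p * unorm q)" for p q
  proof -
    have "cmod (phi (umult a p) q) \<le> C * (unorm (umult a p) * unorm q)" by (rule C)
    also have "\<dots> \<le> C * ((unorm a * unorm p) * unorm q)"
      using \<open>C > 0\<close> by (intro mult_left_mono mult_right_mono unorm_umult_le unorm_nonneg) auto
    finally show ?thesis by (simp add: algebra_simps)
  qed
  then show ?thesis
    by (intro bounded_ubilinearI)
      (simp_all add: bounded_ubilinearD[OF assms] umult_add_right umult_uscale_right)
qed

lemma bounded_ubilinear_umult_right:
  assumes "bounded_ubilinear phi"
  shows "bounded_ubilinear (\<lambda>p q. phi p (umult q a))"
proof -
  obtain C where "C > 0" and C: "\<And>p q. cmod (phi p q) \<le> C * (unorm p * unorm q)"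
    using bounded_ubilinear_bound[OF assms] by blast
  have "cmod (phi p (umult q a)) \<le> (C * unorm a) * (unorm p * unorm q)" for p q
  proof -
    have "cmod (phi p (umult q a)) \<le> C * (unorm p * unorm (umult q a))" by (rule C)
    also have "\<dots> \<le> C * (unorm p * (unorm q * unorm a))"
      using \<open>C > 0\<close> by (intro mult_left_mono unorm_umult_le unorm_nonneg) auto
    finally show ?thesis by (simp add: algebra_simps)
  qed
  then show ?thesis
    by (intro bounded_ubilinearI)
      (simp_all add: bounded_ubilinearD[OF assms] umult_add_left umult_uscale_left)
qed

lemma bounded_ulinear_umult:
  assumes "bounded_ulinear psi"
  shows "bounded_ubilinear (\<lambda>p q. psi (umult p q))"
proof -
  obtain C where "C > 0" and C: "\<And>p. cmod (psi p) \<le> C * unorm p"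
    using bounded_ulinear_bound[OF assms] by blast
  have "cmod (psi (umult p q)) \<le> C * (unorm p * unorm q)" for p q
    using C[of "umult p q"] mult_left_mono[OF unorm_umult_le[of p q], of C] \<open>C > 0\<close> by linarith
  then show ?thesis
    by (intro bounded_ubilinearI) (simp_all add: bounded_ulinearD[OF assms]
        umult_add_left umult_add_right umult_uscale_left umult_uscale_right)
qed

lemma bounded_ulinear_imp_bounded_linear:
  assumes "bounded_ulinear psi"
  shows "bounded_linear psi"
proof -
  obtain C where "C > 0" and C: "\<And>p. cmod (psi p) \<le> C * unorm p"
    using bounded_ulinear_bound[OF assms] by blast
  show ?thesis
  proof (rule bounded_linear_intro[where K = "2 * C"])
    show "psi (p + q) = psi p + psi q" for p q
      by (rule bounded_ulinearD[OF assms])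
    show "psi (r *\<^sub>R p) = r *\<^sub>R psi p" for r p
      by (simp add: scaleR_eq_uscale scaleR_conv_of_real bounded_ulinearD[OF assms])
    show "norm (psi p) \<le> norm p * (2 * C)" for p
    proof -
      have "norm (psi p) \<le> C * unorm p" by (rule C)
      also have "\<dots> \<le> C * (2 * norm p)"
        using \<open>C > 0\<close> by (intro mult_left_mono unorm_le_norm) auto
      finally show ?thesis by (simp add: algebra_simps)
    qed
  qed
qed

section \<open>Pairing tensors with bounded forms\<close>

lemma tev_bound:
  assumes r: "tensor_rep V r"
    and bound: "\<And>p q. p \<in> uset V \<Longrightarrow> q \<in> uset V \<Longrightarrow> cmod (phi p q) \<le> C * (unorm p * unorm q)"
  shows "summable (\<lambda>n. phi (fst (r n)) (snd (r n)))"
    and "cmod (tev phi r) \<le> C * (\<Sum>n. unorm (fst (r n)) * unorm (snd (r n)))"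
proof -
  define B where "B n = unorm (fst (r n)) * unorm (snd (r n))" for n
  have B: "summable B" using r unfolding tensor_rep_def B_def by auto
  have le: "norm (phi (fst (r n)) (snd (r n))) \<le> C * B n" for n
    using bound r unfolding tensor_rep_def B_def by auto
  have CB: "summable (\<lambda>n. C * B n)" using B by (rule summable_mult)
  have norms: "summable (\<lambda>n. norm (phi (fst (r n)) (snd (r n))))"
    by (rule summable_comparison_test'[OF CB, of 0]) (simp add: le)
  then show "summable (\<lambda>n. phi (fst (r n)) (snd (r n)))" by (rule summable_norm_cancel)
  have "cmod (tev phi r) \<le> (\<Sum>n. norm (phi (fst (r n)) (snd (r n))))"
    unfolding tev_def by (rule summable_norm[OF norms])
  also have "\<dots> \<le> (\<Sum>n. C * B n)" by (rule suminf_le[OF le norms CB])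
  also have "\<dots> = C * suminf B" by (rule suminf_mult[OF B])
  finally show "cmod (tev phi r) \<le> C * (\<Sum>n. unorm (fst (r n)) * unorm (snd (r n)))"
    by (simp add: B_def[abs_def])
qed

lemma summable_tev:
  assumes "tensor_rep V r" "bounded_ubilinear phi"
  shows "summable (\<lambda>n. phi (fst (r n)) (snd (r n)))"
proof -
  obtain C where "\<And>p q. cmod (phi p q) \<le> C * (unorm p * unorm q)"
    using bounded_ubilinear_bound[OF assms(2)] by blast
  then show ?thesis using tev_bound(1)[OF assms(1)] by blast
qed

lemma tev_divide:
  assumes "tensor_rep V r" "bounded_ubilinear phi"
  shows "tev (\<lambda>p q. phi p q / c) r = tev phi r / c"
  unfolding tev_def using suminf_divide[OF summable_tev[OF assms]] by simp

lemma tev_tflip: "tev phi (tflip r) = tev (\<lambda>p q. phi q p) r"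
  unfolding tev_def tflip_def by simp

lemma tsymmetric_tev_tflip:
  assumes r: "tensor_rep V r" and sym: "tsymmetric V r" and phi: "bounded_ubilinear phi"
  shows "tev phi (tflip r) = tev phi r"
proof -
  obtain C where "C > 0" and "bilin1 V (\<lambda>p q. phi p q / of_real C)"
    using bounded_ubilinear_scaled_bilin1[OF phi] by blast
  then have "tev (\<lambda>p q. phi p q / of_real C) (tflip r) = tev (\<lambda>p q. phi p q / of_real C) r"
    using sym unfolding tsymmetric_def by blast
  then have "tev phi (tflip r) / of_real C = tev phi r / of_real C"
    unfolding tev_tflip tev_divide[OF r phi] tev_divide[OF r bounded_ubilinear_swap[OF phi]] .
  with \<open>C > 0\<close> show ?thesis by simp
qed

lemma tev_umult:
  fixes psi :: "'a::{cplx_normed_algebra,banach} \<times> complex \<Rightarrow> complex"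
  assumes r: "tensor_rep V r" and psi: "bounded_ulinear psi"
  shows "tev (\<lambda>p q. psi (umult p q)) r = psi (tpi r)"
proof -
  have "summable (\<lambda>n. unorm (fst (r n)) * unorm (snd (r n)))"
    using r unfolding tensor_rep_def by blast
  then have "summable (\<lambda>n. norm (umult (fst (r n)) (snd (r n))))"
    by (rule summable_comparison_test'[of _ 0])
      (simp add: order_trans[OF norm_le_unorm unorm_umult_le])
  then have "summable (\<lambda>n. umult (fst (r n)) (snd (r n)))"
    by (rule summable_norm_cancel)
  then show ?thesis
    unfolding tev_def tpi_def
    by (rule bounded_linear.suminf[OF bounded_ulinear_imp_bounded_linear[OF psi], symmetric])
qed

lemma tcomm_eq_tev_diff:
  "tcomm a r phi = tev (\<lambda>p q. phi (umult a p) q) r - tev (\<lambda>p q. phi p (umult q a)) r"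
  unfolding tcomm_def tev_def by simp

lemma tcomm_eq_tev:
  assumes r: "tensor_rep V r" and phi: "bounded_ubilinear phi"
  shows "tcomm a r phi = tev (\<lambda>p q. phi (umult a p) q - phi p (umult q a)) r"
  unfolding tcomm_eq_tev_diff tev_def
  by (rule suminf_diff[OF summable_tev[OF r bounded_ubilinear_umult_left[OF phi]]
        summable_tev[OF r bounded_ubilinear_umult_right[OF phi]]])

lemma norm_tcomm_le:
  assumes V: "cplx_subalgebra V" and a: "a \<in> uset V" and r: "tensor_rep V r"
    and phi: "bilin1 V phi"
  shows "cmod (tcomm a r phi) \<le> 2 * unorm a * (\<Sum>n. unorm (fst (r n)) * unorm (snd (r n)))"
proof -
  have bound: "cmod (phi p q) \<le> unorm p * unorm q" if "p \<in> uset V" "q \<in> uset V" for p q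
    using phi that unfolding bilin1_def by blast
  have left: "cmod (phi (umult a p) q) \<le> unorm a * (unorm p * unorm q)"
    if "p \<in> uset V" "q \<in> uset V" for p q
  proof -
    have "cmod (phi (umult a p) q) \<le> unorm (umult a p) * unorm q"
      using bound umult_mem_uset[OF V a] that by blast
    also have "\<dots> \<le> (unorm a * unorm p) * unorm q"
      by (intro mult_right_mono unorm_umult_le unorm_nonneg)
    finally show ?thesis by (simp add: algebra_simps)
  qed
  have right: "cmod (phi p (umult q a)) \<le> unorm a * (unorm p * unorm q)"
    if "p \<in> uset V" "q \<in> uset V" for p q
  proof -
    have "cmod (phi p (umult q a)) \<le> unorm p * unorm (umult q a)"
      using bound umult_mem_uset[OF V _ a] that by blast
    also have "\<dots> \<le> unorm p * (unorm q * unorm a)"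
      by (intro mult_left_mono unorm_umult_le unorm_nonneg)
    finally show ?thesis by (simp add: algebra_simps)
  qed
  have "cmod (tcomm a r phi)
      \<le> cmod (tev (\<lambda>p q. phi (umult a p) q) r) + cmod (tev (\<lambda>p q. phi p (umult q a)) r)"
    unfolding tcomm_eq_tev_diff by (rule norm_triangle_ineq4)
  also have "\<dots> \<le> unorm a * (\<Sum>n. unorm (fst (r n)) * unorm (snd (r n)))
      + unorm a * (\<Sum>n. unorm (fst (r n)) * unorm (snd (r n)))"
    by (intro add_mono tev_bound(2)[OF r left] tev_bound(2)[OF r right])
  finally show ?thesis by simp
qed

lemma tcomm_le_pnorm:
  assumes V: "cplx_subalgebra V" and a: "a \<in> uset V" and phi: "bounded_ubilinear phi"
  obtains C where "\<And>r. tensor_rep V r \<Longrightarrow> cmod (tcomm a r phi) \<le> C * pnorm V (tcomm a r)"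
proof -
  obtain C where "C > 0" and phiC: "bilin1 V (\<lambda>p q. phi p q / of_real C)"
    using bounded_ubilinear_scaled_bilin1[OF phi] by blast
  have "cmod (tcomm a r phi) \<le> C * pnorm V (tcomm a r)" if r: "tensor_rep V r" for r
  proof -
    have "bdd_above {cmod (tcomm a r phi') | phi'. bilin1 V phi'}"
      using norm_tcomm_le[OF V a r] by (intro bdd_aboveI) blast
    then have "cmod (tcomm a r (\<lambda>p q. phi p q / of_real C)) \<le> pnorm V (tcomm a r)"
      unfolding pnorm_def using phiC by (intro cSup_upper) auto
    moreover have "tcomm a r (\<lambda>p q. phi p q / of_real C) = tcomm a r phi / of_real C"
      unfolding tcomm_eq_tev_diff
      using tev_divide[OF r bounded_ubilinear_umult_left[OF phi]]
        tev_divide[OF r bounded_ubilinear_umult_right[OF phi]]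
      by (simp add: diff_divide_distrib)
    ultimately show ?thesis using \<open>C > 0\<close> by (simp add: norm_divide divide_le_eq mult.commute)
  qed
  then show ?thesis by (rule that)
qed

text \<open>The twist yields \<open>psi\<close> of the products with the two legs in reverse order;
  symmetry of the tensor restores \<pi>.\<close>
lemma tcomm_twisted_symmetric_eq:
  fixes psi :: "'a::{cplx_normed_algebra,banach} \<times> complex \<Rightarrow> complex"
  assumes r: "tensor_rep V r" and sym: "tsymmetric V r"
    and phi: "bounded_ubilinear phi" and psi: "bounded_ulinear psi"
    and twist: "\<And>p q. phi (umult a p) q - phi p (umult q a) = - psi (umult q p)"
  shows "tcomm a r phi = - psi (tpi r)"
proof -
  have psi2: "bounded_ubilinear (\<lambda>p q. psi (umult p q))"
    using psi by (rule bounded_ulinear_umult)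
  have "tcomm a r phi = tev (\<lambda>p q. - psi (umult q p)) r"
    unfolding tcomm_eq_tev[OF r phi] twist ..
  also have "\<dots> = - tev (\<lambda>p q. psi (umult p q)) (tflip r)"
    unfolding tev_def tflip_def
    using suminf_minus[OF summable_tev[OF r bounded_ubilinear_swap[OF psi2]]] by simp
  also have "\<dots> = - psi (tpi r)"
    unfolding tsymmetric_tev_tflip[OF r sym psi2] tev_umult[OF r psi] ..
  finally show ?thesis .
qed

text \<open>Pairing a\<cdot>t - t\<cdot>a with \<open>phi\<close> tends to 0 and, by the twist, equals -\<open>psi\<close>(\<pi>(t)),
  which tends to \<open>psi\<close>(1).\<close>
lemma sym_pseudo_amenable_twisted_unit_eq_0:
  fixes psi :: "'a::{cplx_normed_algebra,banach} \<times> complex \<Rightarrow> complex"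
  assumes V: "cplx_subalgebra V" and am: "unitization_sym_pseudo_amenable V" and a: "a \<in> uset V"
    and phi: "bounded_ubilinear phi" and psi: "bounded_ulinear psi"
    and twist: "\<And>p q. phi (umult a p) q - phi p (umult q a) = - psi (umult q p)"
  shows "psi (0, 1) = 0"
proof -
  obtain F where "F \<noteq> bot" and ev: "\<forall>\<^sub>F r in F. tensor_rep V r \<and> tsymmetric V r"
    and comm: "((\<lambda>r. pnorm V (tcomm a r)) \<longlongrightarrow> 0) F"
    and unit: "((\<lambda>r. unorm (umult (tpi r) (0, 1) - (0, 1))) \<longlongrightarrow> 0) F"
    using am unit_mem_uset[OF V] a unfolding unitization_sym_pseudo_amenable_def by blast
  obtain C where C: "\<And>r. tensor_rep V r \<Longrightarrow> cmod (tcomm a r phi) \<le> C * pnorm V (tcomm a r)"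
    using tcomm_le_pnorm[OF V a phi] by blast
  obtain K where K: "\<And>p. cmod (psi p) \<le> K * unorm p"
    using bounded_ulinear_bound[OF psi] by blast
  have "((\<lambda>r. psi (tpi r)) \<longlongrightarrow> 0) F"
  proof (rule Lim_null_comparison)
    show "\<forall>\<^sub>F r in F. norm (psi (tpi r)) \<le> C * pnorm V (tcomm a r)"
      using ev
    proof eventually_elim
      case (elim r)
      then have "tcomm a r phi = - psi (tpi r)"
        using tcomm_twisted_symmetric_eq[where phi = phi and psi = psi and a = a, OF _ _ phi psi twist]
        by blast
      then show ?case using C[of r] elim by simp
    qed
    show "((\<lambda>r. C * pnorm V (tcomm a r)) \<longlongrightarrow> 0) F"
      using comm by (rule tendsto_mult_right_zero)
  qed
  moreover have "((\<lambda>r. psi (tpi r)) \<longlongrightarrow> psi (0, 1)) F"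
  proof (rule LIM_zero_cancel, rule Lim_null_comparison)
    have "norm (psi (tpi r) - psi (0, 1)) \<le> K * unorm (tpi r - (0, 1))" for r
      using K linear_diff[OF bounded_linear.linear[OF bounded_ulinear_imp_bounded_linear[OF psi]]]
      by metis
    then show "\<forall>\<^sub>F r in F. norm (psi (tpi r) - psi (0, 1)) \<le> K * unorm (tpi r - (0, 1))"
      by (intro always_eventually allI)
    show "((\<lambda>r. K * unorm (tpi r - (0, 1))) \<longlongrightarrow> 0) F"
      using unit by (simp add: tendsto_mult_right_zero)
  qed
  ultimately show ?thesis using tendsto_unique[OF \<open>F \<noteq> bot\<close>] by metis
qed

section \<open>Central derivations\<close>

locale central_derivation =
  fixes lm :: "'a::{cplx_normed_algebra,banach} \<Rightarrow> 'x::{cplx_normed_vector,banach} \<Rightarrow> 'x"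
    and rm :: "'x \<Rightarrow> 'a \<Rightarrow> 'x"
    and d :: "'a \<Rightarrow> 'x"
  assumes bimod: "banach_bimodule lm rm"
    and der: "bounded_derivation lm rm d"
    and central: "central_map lm rm d"
begin

lemma rm_add_left: "rm (x + y) a = rm x a + rm y a"
  and rm_add_right: "rm x (a + b) = rm x a + rm x b"
  and rm_scaleC_left: "rm (scaleC c x) a = scaleC c (rm x a)"
  and rm_scaleC_right: "rm x (scaleC c a) = scaleC c (rm x a)"
  and rm_mult: "rm x (a * b) = rm (rm x a) b"
  and lm_add_right: "lm a (x + y) = lm a x + lm a y"
  using bimod unfolding banach_bimodule_def by blast+

lemma d_add: "d (a + b) = d a + d b"
  and d_scaleC: "d (scaleC c a) = scaleC c (d a)"
  and d_mult: "d (a * b) = rm (d a) b + lm a (d b)"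
  using der unfolding bounded_derivation_def by blast+

lemma d_central: "lm a (d b) = rm (d b) a"
  using central unfolding central_map_def by blast

lemma rm_zero_left [simp]: "rm 0 a = 0"
  using rm_add_left[of 0 0 a] by simp

lemma rm_zero_right [simp]: "rm x 0 = 0"
  using rm_add_right[of x 0 0] by simp

lemma lm_zero_right [simp]: "lm a 0 = 0"
  using lm_add_right[of a 0 0] by simp

lemma d_zero [simp]: "d 0 = 0"
  using d_add[of 0 0] by simp

lemma bounded_linear_d: "bounded_linear d"
proof -
  obtain K where K: "\<And>a. norm (d a) \<le> K * norm a"
    using der unfolding bounded_derivation_def by blast
  show ?thesis
  proof (rule bounded_linear_intro[where K = K])
    show "d (x + y) = d x + d y" for x y by (rule d_add)
    show "d (r *\<^sub>R x) = r *\<^sub>R d x" for r x by (simp add: scaleR_scaleC d_scaleC)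
    show "norm (d x) \<le> norm x * K" for x using K[of x] by (simp add: mult.commute)
  qed
qed

definition ract :: "'x \<Rightarrow> 'a \<times> complex \<Rightarrow> 'x" where
  "ract y p = rm y (fst p) + scaleC (snd p) y"

lemma ract_add_left: "ract (y + y') p = ract y p + ract y' p"
  unfolding ract_def by (simp add: rm_add_left scaleC_add_right algebra_simps)

lemma ract_add_right: "ract y (p + p') = ract y p + ract y p'"
  unfolding ract_def by (simp add: rm_add_right scaleC_add_left algebra_simps)

lemma ract_scaleC_left: "ract (scaleC c y) p = scaleC c (ract y p)"
  unfolding ract_def by (simp add: rm_scaleC_left scaleC_add_right scaleC_scaleC mult.commute)

lemma ract_uscale_right: "ract y (uscale c p) = scaleC c (ract y p)"
  unfolding ract_def uscale_def by (simp add: rm_scaleC_right scaleC_add_right scaleC_scaleC)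

lemma ract_unit [simp]: "ract y (0, 1) = y"
  unfolding ract_def by (simp add: scaleC_one)

lemma ract_bound:
  obtains K where "K \<ge> 0" "\<And>y p. norm (ract y p) \<le> K * (norm y * unorm p)"
proof -
  obtain K where K: "\<And>a x. norm (rm x a) \<le> K * norm a * norm x"
    using bimod unfolding banach_bimodule_def by blast
  have "norm (ract y p) \<le> (\<bar>K\<bar> + 1) * (norm y * unorm p)" for y p
  proof -
    have "norm (rm y (fst p)) \<le> \<bar>K\<bar> * norm (fst p) * norm y"
    proof -
      have "K * norm (fst p) * norm y \<le> \<bar>K\<bar> * norm (fst p) * norm y"
        by (intro mult_right_mono) auto
      then show ?thesis using K[where a = "fst p" and x = y] by linarith
    qed
    then have "norm (ract y p) \<le> \<bar>K\<bar> * norm (fst p) * norm y + cmod (snd p) * norm y"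
      unfolding ract_def using norm_triangle_ineq[of "rm y (fst p)" "scaleC (snd p) y"]
      by (simp add: norm_scaleC)
    also have "\<dots> \<le> (\<bar>K\<bar> + 1) * (norm y * unorm p)"
      unfolding unorm_def by (simp add: algebra_simps)
    finally show ?thesis .
  qed
  then show ?thesis by (intro that[of "\<bar>K\<bar> + 1"]) auto
qed

lemma d_bound:
  obtains K where "K \<ge> 0" "\<And>a. norm (d a) \<le> K * norm a"
proof -
  obtain K where K: "\<And>a. norm (d a) \<le> K * norm a"
    using der unfolding bounded_derivation_def by blast
  have "norm (d a) \<le> \<bar>K\<bar> * norm a" for a
  proof -
    have "K * norm a \<le> \<bar>K\<bar> * norm a" by (intro mult_right_mono) auto
    then show ?thesis using K[of a] by linarith
  qed
  then show ?thesis by (intro that[of "\<bar>K\<bar>"]) auto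
qed

text \<open>Centrality turns the term w\<cdot>d(a) of d(w a) into d(a)\<cdot>w.\<close>
lemma ract_d_umult:
  "ract (d (fst (umult q (a, 0)))) p = ract (d (fst q)) (umult (a, 0) p) + ract (d a) (umult q p)"
proof -
  obtain v l w m where p: "p = (v, l)" and q: "q = (w, m)" by fastforce
  have "d (fst (umult q (a, 0))) = rm (d a) w + rm (d w) a + scaleC m (d a)"
    unfolding q umult_def by (simp add: d_add d_scaleC d_mult d_central)
  then show ?thesis
    unfolding p q umult_def ract_def
    by (simp add: rm_add_left rm_add_right rm_scaleC_left rm_scaleC_right rm_mult
        scaleC_add_right scaleC_scaleC algebra_simps)
qed

lemma bounded_ulinear_ract:
  assumes f: "bounded_cfunctional f"
  shows "bounded_ulinear (\<lambda>p. f (ract y p))"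
proof -
  obtain C where "C \<ge> 0" and C: "\<And>x. cmod (f x) \<le> C * norm x"
    using bounded_cfunctional_bound[OF f] by blast
  obtain K where "K \<ge> 0" and K: "\<And>y p. norm (ract y p) \<le> K * (norm y * unorm p)"
    using ract_bound by blast
  have "cmod (f (ract y p)) \<le> (C * K * norm y) * unorm p" for p
  proof -
    have "cmod (f (ract y p)) \<le> C * norm (ract y p)" by (rule C)
    also have "\<dots> \<le> C * (K * (norm y * unorm p))"
      using \<open>C \<ge> 0\<close> by (intro mult_left_mono K)
    finally show ?thesis by (simp add: algebra_simps)
  qed
  then show ?thesis
    unfolding bounded_ulinear_def
    by (auto simp: bounded_cfunctionalD[OF f] ract_add_right ract_uscale_right)
qed

lemma bounded_ubilinear_ract_d:
  assumes f: "bounded_cfunctional f"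
  shows "bounded_ubilinear (\<lambda>p q. f (ract (d (fst q)) p))"
proof -
  obtain C where "C \<ge> 0" and C: "\<And>x. cmod (f x) \<le> C * norm x"
    using bounded_cfunctional_bound[OF f] by blast
  obtain K where "K \<ge> 0" and K: "\<And>y p. norm (ract y p) \<le> K * (norm y * unorm p)"
    using ract_bound by blast
  obtain Kd where "Kd \<ge> 0" and Kd: "\<And>a. norm (d a) \<le> Kd * norm a"
    using d_bound by blast
  have "cmod (f (ract (d (fst q)) p)) \<le> (C * K * Kd) * (unorm p * unorm q)" for p q
  proof -
    have "norm (d (fst q)) \<le> Kd * unorm q"
    proof -
      have "Kd * norm (fst q) \<le> Kd * unorm q"
        using \<open>Kd \<ge> 0\<close> by (intro mult_left_mono) (auto simp: unorm_def)
      then show ?thesis using Kd[of "fst q"] by linarith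
    qed
    have "cmod (f (ract (d (fst q)) p)) \<le> C * norm (ract (d (fst q)) p)" by (rule C)
    also have "\<dots> \<le> C * (K * (norm (d (fst q)) * unorm p))"
      using \<open>C \<ge> 0\<close> by (intro mult_left_mono K)
    also have "\<dots> \<le> C * (K * ((Kd * unorm q) * unorm p))"
      using \<open>C \<ge> 0\<close> \<open>K \<ge> 0\<close> \<open>norm (d (fst q)) \<le> Kd * unorm q\<close>
      by (intro mult_left_mono mult_right_mono unorm_nonneg) auto
    finally show ?thesis by (simp add: algebra_simps)
  qed
  moreover have "f (ract (d (fst (uscale c q))) p) = c * f (ract (d (fst q)) p)" for c p q
    unfolding uscale_def by (simp add: d_scaleC ract_scaleC_left bounded_cfunctionalD[OF f])
  ultimately show ?thesis
    by (intro bounded_ubilinearI)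
      (simp_all add: bounded_cfunctionalD[OF f] ract_add_left ract_add_right ract_uscale_right d_add)
qed

lemma d_eq_0_on_sym_pseudo_amenable:
  assumes V: "cplx_subalgebra V" and am: "unitization_sym_pseudo_amenable V" and "a \<in> V"
  shows "d a = 0"
proof (rule ccontr)
  assume "d a \<noteq> 0"
  then obtain f where f: "bounded_cfunctional f" and "f (d a) \<noteq> 0"
    by (rule bounded_cfunctional_nonzero)
  have "(a, 0) \<in> uset V" using \<open>a \<in> V\<close> by (simp add: mem_uset_iff)
  then have "f (ract (d a) (0, 1)) = 0"
  proof (rule sym_pseudo_amenable_twisted_unit_eq_0[OF V am _
        bounded_ubilinear_ract_d[OF f] bounded_ulinear_ract[OF f]])
    show "f (ract (d (fst q)) (umult (a, 0) p)) - f (ract (d (fst (umult q (a, 0)))) p)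
        = - f (ract (d a) (umult q p))" for p q
      unfolding ract_d_umult bounded_cfunctionalD[OF f] by simp
  qed
  with \<open>f (d a) \<noteq> 0\<close> show False by simp
qed

lemma closed_subalgebra_kernel: "closed_subalgebra {a. d a = 0}"
  unfolding closed_subalgebra_def cplx_subalgebra_def
proof (intro conjI ballI allI)
  show "closed {a. d a = 0}"
    using bounded_linear_d
    by (intro closed_Collect_eq continuous_on_id) (auto intro: linear_continuous_on)
qed (simp_all add: d_add d_scaleC d_mult)

end

theorem corollary6p2:
  fixes lm :: "'a::{cplx_normed_algebra,banach} \<Rightarrow> 'x::{cplx_normed_vector,banach} \<Rightarrow> 'x"
    and rm :: "'x \<Rightarrow> 'a \<Rightarrow> 'x"
    and d :: "'a \<Rightarrow> 'x"
  assumes gen: "(UNIV :: 'a set) = \<Inter> {W. closed_subalgebra W \<and>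
                  (\<forall>V. closed_subalgebra V \<and> unitization_sym_pseudo_amenable V \<longrightarrow> V \<subseteq> W)}"
    and bimod: "banach_bimodule lm rm"
    and der: "bounded_derivation lm rm d"
    and central: "central_map lm rm d"
  shows "\<forall>a. d a = 0"
proof -
  interpret central_derivation lm rm d
    using bimod der central by unfold_locales
  have "V \<subseteq> {a. d a = 0}" if "closed_subalgebra V" "unitization_sym_pseudo_amenable V" for V
    using d_eq_0_on_sym_pseudo_amenable that unfolding closed_subalgebra_def by blast
  then have "UNIV \<subseteq> {a. d a = 0}"
    using gen closed_subalgebra_kernel by blast
  then show ?thesis by blast
qed

end
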